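(* Skeptic can weakly force the event \[ E_2:=\{\xi\in\Omega:\ |s_n|>\sqrt n-1\ \text{for infinitely many } n\}. \]
   Context: Fair-coin game: in rounds $n=1,2,\dots$ Skeptic announces $M_n\in\mathbb{R}$ (depending only on $x_1,\dots,x_{n-1}$), then Reality announces $x_n\in\{-1,1\}$. A path is an infinite sequence $\xi=x_1x_2\cdots\in\{-1,1\}^{\mathbb{N}}$, and $\Omega$ is the set of paths. We write $s_n:=x_1+\cdots+x_n$, with $s_0=0$. A strategy $\mathcal{P}$ assigns a real bet $\mathcal{P}(x_1\cdots x_{n-1})$ to each finite sequence. Its capital process with zero initial capital is $\mathcal{K}^{\mathcal{P}}_n(\xi)=\sum_{k=1}^n\mathcal{P}(x_1\cdots x_{k-1})x_k$. Skeptic weakly forces $E\subseteq\Omega$ if there is a strategy $\mathcal{P}$ such that $\mathcal{K}^{\mathcal{P}}_n(\xi)\ge-1$ for all $\xi\in\Omega$ and $n\ge0$, and $\limsup_n\mathcal{K}^{\mathcal{P}}_n(\xi)=\infty$ for every $\xi\notin E$. *)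

theory Defs
  imports "HOL-Analysis.Analysis" "HOL-Library.Extended_Real"
begin

text \<open>A path \<xi> = x_1 x_2 ... is represented as a function nat => real with
  \<xi> k = x_(k+1) in {-1,1}.\<close>

definition paths :: "(nat \<Rightarrow> real) set" where
  "paths = {\<xi>. \<forall>k. \<xi> k \<in> {-1, 1}}"

definition partial_sum :: "(nat \<Rightarrow> real) \<Rightarrow> nat \<Rightarrow> real" where
  "partial_sum \<xi> n = (\<Sum>k<n. \<xi> k)"

text \<open>A strategy maps a finite sequence x_1 ... x_(n-1) (as a list) to a real bet.\<close>
type_synonym strategy = "real list \<Rightarrow> real"

definition capital :: "strategy \<Rightarrow> nat \<Rightarrow> (nat \<Rightarrow> real) \<Rightarrow> real" where
  "capital P n \<xi> = (\<Sum>k<n. P (map \<xi> [0..<k]) * \<xi> k)"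

definition weakly_forces :: "(nat \<Rightarrow> real) set \<Rightarrow> bool" where
  "weakly_forces E \<longleftrightarrow> (\<exists>P::strategy.
      (\<forall>\<xi>\<in>paths. \<forall>n. capital P n \<xi> \<ge> -1) \<and>
      (\<forall>\<xi>\<in>paths. \<xi> \<notin> E \<longrightarrow> limsup (\<lambda>n. ereal (capital P n \<xi>)) = \<infinity>))"

definition E2 :: "(nat \<Rightarrow> real) set" where
  "E2 = {\<xi>\<in>paths. \<exists>\<^sub>\<infinity>n. \<bar>partial_sum \<xi> n\<bar> > sqrt (real n) - 1}"

end

theory Submission
  imports Defs
begin

text \<open>The potential V n = n - s_n^2 changes by exactly -2 s_n x_n in round n, so betting
  -2 c s_n turns capital into c times the increments of V. Skeptic runs, for every start
  m \<ge> 1, such a component with weight c_m = 1/(m 2^m), which bets only as long as the path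
  has stayed in the band |s_j| \<le> sqrt j - 1 since time m. Inside the band V stays
  nonnegative one step ahead, so component m never loses more than c_m m = 2^-m and the
  total loss is at most 1. Off E2 the path is eventually always in the band, where
  V n \<ge> 2 sqrt n - 1, so the corresponding component wins without bound.\<close>

definition in_band :: "(nat \<Rightarrow> real) \<Rightarrow> nat \<Rightarrow> bool" where
  "in_band \<xi> j \<longleftrightarrow> \<bar>partial_sum \<xi> j\<bar> \<le> sqrt (real j) - 1"

definition stays_in_band :: "(nat \<Rightarrow> real) \<Rightarrow> nat \<Rightarrow> nat \<Rightarrow> bool" where
  "stays_in_band \<xi> m k \<longleftrightarrow> m \<le> k \<and> (\<forall>j\<in>{m..k}. in_band \<xi> j)"

definition potential :: "(nat \<Rightarrow> real) \<Rightarrow> nat \<Rightarrow> real" where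
  "potential \<xi> k = real k - (partial_sum \<xi> k)\<^sup>2"

definition stake :: "nat \<Rightarrow> real" where
  "stake m = 1 / (real m * 2 ^ m)"

definition band_bet :: "nat \<Rightarrow> (nat \<Rightarrow> real) \<Rightarrow> nat \<Rightarrow> real" where
  "band_bet m \<xi> k = (if stays_in_band \<xi> m k then -2 * stake m * partial_sum \<xi> k else 0)"

text \<open>A history l = x_1 ... x_k is read as the path prefix (!) l, whose values beyond
  index k are never consulted by band_bet.\<close>

definition band_component :: "nat \<Rightarrow> strategy" where
  "band_component m l = band_bet m ((!) l) (length l)"

definition band_strategy :: strategy where
  "band_strategy l = (\<Sum>m\<in>{1..length l}. band_component m l)"

lemma capital_Suc:
  "capital P (Suc n) \<xi> = capital P n \<xi> + P (map \<xi> [0..<n]) * \<xi> n"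
  unfolding capital_def by simp

lemma capital_cong:
  assumes "\<And>k. k < n \<Longrightarrow> P (map \<xi> [0..<k]) = Q (map \<xi> [0..<k])"
  shows "capital P n \<xi> = capital Q n \<xi>"
  unfolding capital_def using assms by (auto intro!: sum.cong)

lemma capital_sum:
  "capital (\<lambda>l. \<Sum>i\<in>A. P i l) n \<xi> = (\<Sum>i\<in>A. capital (P i) n \<xi>)"
  unfolding capital_def by (simp add: sum_distrib_right sum.swap[of _ A])

lemma sum_half_powers: "(\<Sum>m\<in>{1..n}. (1/2::real) ^ m) = 1 - (1/2) ^ n"
  by (induction n) (auto simp: sum.atLeast_Suc_atMost_Suc_shift)

lemma filterlim_sqrt_affine_sequentially:
  fixes a b :: real
  assumes "a > 0"
  shows "filterlim (\<lambda>n. a * sqrt (real n) + b) at_top sequentially"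
proof -
  have "filterlim (\<lambda>n. sqrt (real n)) at_top sequentially"
    using filterlim_compose[OF sqrt_at_top filterlim_real_sequentially] by (simp add: o_def)
  then have "filterlim (\<lambda>n. a * sqrt (real n)) at_top sequentially"
    using assms by (intro filterlim_tendsto_pos_mult_at_top[OF tendsto_const])
  then show ?thesis
    by (subst add.commute) (rule filterlim_tendsto_add_at_top[OF tendsto_const])
qed

lemma partial_sum_Suc: "partial_sum \<xi> (Suc n) = partial_sum \<xi> n + \<xi> n"
  unfolding partial_sum_def by simp

lemma partial_sum_prefix:
  "j \<le> k \<Longrightarrow> partial_sum ((!) (map \<xi> [0..<k])) j = partial_sum \<xi> j"
  unfolding partial_sum_def by (intro sum.cong) auto

lemma path_value_cases: "\<xi> \<in> paths \<Longrightarrow> \<xi> k = -1 \<or> \<xi> k = 1"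
  unfolding paths_def by auto

lemma potential_Suc:
  assumes "\<xi> \<in> paths"
  shows "potential \<xi> (Suc n) = potential \<xi> n - 2 * partial_sum \<xi> n * \<xi> n"
  using path_value_cases[OF assms, of n]
  unfolding potential_def partial_sum_Suc by (auto simp: power2_eq_square algebra_simps)

lemma potential_Suc_nonneg_if_in_band:
  assumes "\<xi> \<in> paths" "in_band \<xi> n"
  shows "potential \<xi> (Suc n) \<ge> 0"
proof -
  have "\<bar>partial_sum \<xi> (Suc n)\<bar> \<le> \<bar>partial_sum \<xi> n\<bar> + 1"
    using path_value_cases[OF assms(1), of n] unfolding partial_sum_Suc by auto
  also have "\<dots> \<le> sqrt (real (Suc n))"
    using assms(2) real_sqrt_le_mono[of "real n" "real (Suc n)"] unfolding in_band_def by linarith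
  finally have "\<bar>partial_sum \<xi> (Suc n)\<bar>\<^sup>2 \<le> (sqrt (real (Suc n)))\<^sup>2"
    by (rule power_mono) simp
  then show ?thesis unfolding potential_def by simp
qed

lemma potential_ge_if_in_band:
  assumes "in_band \<xi> n"
  shows "potential \<xi> n \<ge> 2 * sqrt (real n) - 1"
proof -
  have "\<bar>partial_sum \<xi> n\<bar> \<le> sqrt (real n) - 1" using assms unfolding in_band_def .
  then have "\<bar>partial_sum \<xi> n\<bar>\<^sup>2 \<le> (sqrt (real n) - 1)\<^sup>2"
    by (rule power_mono) simp
  then have "(partial_sum \<xi> n)\<^sup>2 \<le> (sqrt (real n) - 1)\<^sup>2"
    by simp
  also have "\<dots> = real n - 2 * sqrt (real n) + 1"
    by (simp add: power2_eq_square algebra_simps)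
  finally show ?thesis unfolding potential_def by simp
qed

lemma potential_le: "potential \<xi> m \<le> real m"
  unfolding potential_def by simp

lemma stake_nonneg: "stake m \<ge> 0"
  unfolding stake_def by simp

lemma stake_times_start: "1 \<le> m \<Longrightarrow> stake m * real m = (1/2) ^ m"
  unfolding stake_def by (simp add: power_one_over)

lemma band_component_prefix: "band_component m (map \<xi> [0..<k]) = band_bet m \<xi> k"
  by (simp add: band_component_def band_bet_def stays_in_band_def in_band_def
      partial_sum_prefix)

lemma capital_band_component:
  "capital (band_component m) n \<xi> = (\<Sum>k<n. band_bet m \<xi> k * \<xi> k)"
  unfolding capital_def band_component_prefix ..

lemma capital_band_component_before_start:
  "n \<le> m \<Longrightarrow> capital (band_component m) n \<xi> = 0"
  unfolding capital_band_component by (auto simp: band_bet_def stays_in_band_def)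

lemma capital_band_component_in_band:
  assumes "\<xi> \<in> paths" "m \<le> n" "\<forall>j\<in>{m..<n}. in_band \<xi> j"
  shows "capital (band_component m) n \<xi> = stake m * (potential \<xi> n - potential \<xi> m)"
  using assms(2,3)
proof (induction n rule: dec_induct)
  case base
  show ?case using capital_band_component_before_start by simp
next
  case (step n)
  then have "stays_in_band \<xi> m n" unfolding stays_in_band_def by auto
  then have "band_bet m \<xi> n * \<xi> n = stake m * (potential \<xi> (Suc n) - potential \<xi> n)"
    unfolding band_bet_def potential_Suc[OF assms(1)] by simp
  with step show ?case
    unfolding capital_Suc band_component_prefix by (simp add: algebra_simps)
qed

lemma capital_band_component_ge:
  assumes "\<xi> \<in> paths"
  shows "capital (band_component m) n \<xi> \<ge> - stake m * real m"
proof (induction n)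
  case 0
  show ?case using capital_band_component_before_start[of 0 m] by (simp add: stake_def)
next
  case (Suc n)
  show ?case
  proof (cases "stays_in_band \<xi> m n")
    case True
    then have "capital (band_component m) (Suc n) \<xi>
        = stake m * (potential \<xi> (Suc n) - potential \<xi> m)"
      using capital_band_component_in_band[OF assms] unfolding stays_in_band_def by simp
    moreover have "potential \<xi> (Suc n) - potential \<xi> m \<ge> - real m"
      using True potential_Suc_nonneg_if_in_band[OF assms, of n] potential_le[of \<xi> m]
      unfolding stays_in_band_def by auto
    then have "stake m * (- real m) \<le> stake m * (potential \<xi> (Suc n) - potential \<xi> m)"
      by (rule mult_left_mono[OF _ stake_nonneg])
    ultimately show ?thesis by simp
  next
    case False
    then show ?thesis
      using Suc.IH unfolding capital_Suc band_component_prefix band_bet_def by simp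
  qed
qed

lemma capital_band_strategy:
  "capital band_strategy n \<xi> = (\<Sum>m\<in>{1..n}. capital (band_component m) n \<xi>)"
proof -
  have "capital band_strategy n \<xi> = capital (\<lambda>l. \<Sum>m\<in>{1..n}. band_component m l) n \<xi>"
  proof (rule capital_cong)
    fix k assume "k < n"
    then show "band_strategy (map \<xi> [0..<k]) = (\<Sum>m\<in>{1..n}. band_component m (map \<xi> [0..<k]))"
      unfolding band_strategy_def band_component_prefix
      by (intro sum.mono_neutral_left) (auto simp: band_bet_def stays_in_band_def)
  qed
  then show ?thesis by (simp add: capital_sum)
qed

lemma sum_capital_band_component_ge:
  assumes "\<xi> \<in> paths" "A \<subseteq> {1..n}"
  shows "(\<Sum>m\<in>A. capital (band_component m) n \<xi>) \<ge> -1"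
proof -
  have "(\<Sum>m\<in>A. capital (band_component m) n \<xi>) \<ge> (\<Sum>m\<in>A. - ((1/2::real) ^ m))"
  proof (rule sum_mono)
    fix m assume "m \<in> A"
    then have "1 \<le> m" using assms(2) by auto
    then show "- ((1/2::real) ^ m) \<le> capital (band_component m) n \<xi>"
      using capital_band_component_ge[OF assms(1), of m n] stake_times_start by simp
  qed
  moreover have "(\<Sum>m\<in>A. (1/2::real) ^ m) \<le> (\<Sum>m\<in>{1..n}. (1/2::real) ^ m)"
    using assms(2) by (intro sum_mono2) auto
  moreover have "(\<Sum>m\<in>{1..n}. (1/2::real) ^ m) \<le> 1"
    unfolding sum_half_powers by simp
  ultimately show ?thesis by (simp add: sum_negf)
qed

lemma capital_band_strategy_ge: "\<xi> \<in> paths \<Longrightarrow> capital band_strategy n \<xi> \<ge> -1"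
  using sum_capital_band_component_ge[of \<xi> "{1..n}"] by (simp add: capital_band_strategy)

lemma capital_band_strategy_ge_in_band:
  assumes "\<xi> \<in> paths" "1 \<le> m" "m \<le> n" "\<forall>j\<in>{m..n}. in_band \<xi> j"
  shows "capital band_strategy n \<xi> \<ge> stake m * (2 * sqrt (real n) - 1 - real m) - 1"
proof -
  have "potential \<xi> n - potential \<xi> m \<ge> 2 * sqrt (real n) - 1 - real m"
    using assms(3,4) potential_ge_if_in_band[of \<xi> n] potential_le[of \<xi> m] by auto
  then have "capital (band_component m) n \<xi> \<ge> stake m * (2 * sqrt (real n) - 1 - real m)"
    using capital_band_component_in_band[OF assms(1,3)] assms(4)
    by (simp add: stake_nonneg mult_left_mono)
  moreover have "capital band_strategy n \<xi>
      = capital (band_component m) n \<xi> + (\<Sum>j\<in>{1..n} - {m}. capital (band_component j) n \<xi>)"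
    using assms(2,3) unfolding capital_band_strategy by (intro sum.remove) auto
  moreover have "(\<Sum>j\<in>{1..n} - {m}. capital (band_component j) n \<xi>) \<ge> -1"
    using assms(1) by (rule sum_capital_band_component_ge) auto
  ultimately show ?thesis by linarith
qed

lemma capital_band_strategy_at_top:
  assumes "\<xi> \<in> paths" "1 \<le> m" "\<forall>j\<ge>m. in_band \<xi> j"
  shows "filterlim (\<lambda>n. capital band_strategy n \<xi>) at_top sequentially"
proof (rule filterlim_at_top_mono)
  have "2 * stake m > 0" using assms(2) by (simp add: stake_def)
  then show "filterlim (\<lambda>n. 2 * stake m * sqrt (real n) + (- stake m * (1 + real m) - 1))
      at_top sequentially"
    by (rule filterlim_sqrt_affine_sequentially)
  show "\<forall>\<^sub>F n in sequentially.
      2 * stake m * sqrt (real n) + (- stake m * (1 + real m) - 1) \<le> capital band_strategy n \<xi>"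
  proof (rule eventually_sequentiallyI)
    fix n assume "m \<le> n"
    then have "stake m * (2 * sqrt (real n) - 1 - real m) - 1 \<le> capital band_strategy n \<xi>"
      using assms by (intro capital_band_strategy_ge_in_band) auto
    then show "2 * stake m * sqrt (real n) + (- stake m * (1 + real m) - 1)
        \<le> capital band_strategy n \<xi>"
      by (simp add: algebra_simps)
  qed
qed

lemma in_band_eventually_if_not_in_E2:
  assumes "\<xi> \<in> paths" "\<xi> \<notin> E2"
  obtains m where "1 \<le> m" "\<forall>j\<ge>m. in_band \<xi> j"
proof -
  have "\<forall>\<^sub>\<infinity>n. in_band \<xi> n"
    using assms unfolding E2_def in_band_def by (simp add: not_frequently not_less)
  then obtain N where "\<forall>n>N. in_band \<xi> n"
    unfolding MOST_nat by blast
  then show ?thesis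
    by (intro that[of "Suc N"]) auto
qed

theorem theorem2:
  shows "weakly_forces E2"
  unfolding weakly_forces_def
proof (intro exI[of _ band_strategy] conjI ballI impI allI)
  fix \<xi> n assume "\<xi> \<in> paths"
  then show "capital band_strategy n \<xi> \<ge> -1" by (rule capital_band_strategy_ge)
next
  fix \<xi> assume "\<xi> \<in> paths" "\<xi> \<notin> E2"
  then obtain m where "1 \<le> m" "\<forall>j\<ge>m. in_band \<xi> j"
    by (rule in_band_eventually_if_not_in_E2)
  with \<open>\<xi> \<in> paths\<close> have "filterlim (\<lambda>n. capital band_strategy n \<xi>) at_top sequentially"
    by (rule capital_band_strategy_at_top)
  then show "limsup (\<lambda>n. ereal (capital band_strategy n \<xi>)) = \<infinity>"
    by (intro lim_imp_Limsup) (simp_all add: tendsto_PInfty_eq_at_top)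
qed

end
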